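(* Let $m\ge2$ and $G=CK(2m-1)$. There exists a set $B$ of $m$ edges of $G$ that has an edge in common with every simple Hamiltonian path of $G$.
   Context: $CK(2m-1)$ is the complete convex geometric graph on $2m-1$ points in convex position in the plane, labelled cyclically $0,\dots,2m-2$ (elements of $\mathbb{Z}_{2m-1}$), with all segments between vertices as edges. A simple Hamiltonian path is a path through all vertices whose edges pairwise do not cross. *)

theory Defs
  imports Main
begin

text \<open>The complete convex geometric graph CK(n): vertices 0,...,n-1 placed in
convex position in this cyclic order; every pair of distinct vertices is an edge
(an unordered pair, represented as a two-element set).\<close>

definition ck_edges :: "nat \<Rightarrow> nat set set" where
  "ck_edges n = {{a, b} | a b. a < n \<and> b < n \<and> a \<noteq> b}"

text \<open>For points in convex position, two segments cross iff their four
endpoints are distinct and interleave in the cyclic order, i.e. a < c < b < d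
after naming them suitably.\<close>

definition crosses :: "nat set \<Rightarrow> nat set \<Rightarrow> bool" where
  "crosses e f \<longleftrightarrow>
     (\<exists>a b c d. ((e = {a, b} \<and> f = {c, d}) \<or> (e = {c, d} \<and> f = {a, b}))
                 \<and> a < c \<and> c < b \<and> b < d)"

definition path_edges :: "nat list \<Rightarrow> nat set set" where
  "path_edges p = {{p ! i, p ! Suc i} | i. Suc i < length p}"

definition simple_ham_path :: "nat \<Rightarrow> nat list \<Rightarrow> bool" where
  "simple_ham_path n p \<longleftrightarrow>
     distinct p \<and> set p = {0..<n} \<and>
     (\<forall>e\<in>path_edges p. \<forall>f\<in>path_edges p. \<not> crosses e f)"

end

theory Submission
  imports Defs
begin

text \<open>Take B to consist of the edges from 0 to 1 and to the even vertices. A path edge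
{0, a} is crossed by every segment joining a vertex below a to a vertex above a, so each
stretch of a simple path avoiding 0 and its path-neighbours stays on one side of every such
fan edge. Deleting 0 and its d \<in> {1, 2} path-neighbours leaves at most d stretches, while the
d fan edges cut the remaining vertices into d + 1 nonempty arcs unless 0 is joined to 1, to
n - 1, or to two consecutive vertices. In each of these cases one path edge at 0 ends in 1 or
in an even vertex, i.e. lies in B.\<close>

lemma path_edges_nth: "Suc i < length p \<Longrightarrow> {p ! i, p ! Suc i} \<in> path_edges p"
  unfolding path_edges_def by blast

lemma crosses_fan: "0 < x \<Longrightarrow> x < a \<Longrightarrow> a < y \<Longrightarrow> crosses {0, a} {x, y}"
  unfolding crosses_def by blast

lemma simple_ham_path_length: "simple_ham_path n p \<Longrightarrow> length p = n"
  unfolding simple_ham_path_def by (metis card_atLeastLessThan diff_zero distinct_card)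

lemma simple_ham_path_obtain_position:
  assumes "simple_ham_path n p" "v < n"
  obtains t where "t < n" "p ! t = v"
  using assms simple_ham_path_length[OF assms(1)] unfolding simple_ham_path_def
  by (metis atLeastLessThan_iff in_set_conv_nth zero_le)

lemma fan_side_preserved_along_edge:
  assumes nc: "\<forall>e\<in>path_edges p. \<forall>f\<in>path_edges p. \<not> crosses e f"
    and fan: "{0, a} \<in> path_edges p" and edge: "{x, y} \<in> path_edges p"
    and "x \<notin> {0, a}" "y \<notin> {0, a}"
  shows "x < a \<longleftrightarrow> y < a"
proof (rule ccontr)
  assume "\<not> (x < a \<longleftrightarrow> y < a)"
  then have "crosses {0, a} {x, y} \<or> crosses {0, a} {y, x}"
    using assms(4,5) crosses_fan by (metis insertCI linorder_neqE_nat neq0_conv)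
  then show False
    using nc fan edge by (metis insert_commute)
qed

lemma fan_side_constant_on_segment:
  assumes nc: "\<forall>e\<in>path_edges p. \<forall>f\<in>path_edges p. \<not> crosses e f"
    and fan: "{0, a} \<in> path_edges p" and "hi < length p"
    and avoid: "\<And>k. lo \<le> k \<Longrightarrow> k \<le> hi \<Longrightarrow> p ! k \<notin> {0, a}"
    and "lo \<le> s" "s \<le> hi"
  shows "p ! s < a \<longleftrightarrow> p ! lo < a"
  using assms(5,6)
proof (induction s)
  case 0
  then show ?case by simp
next
  case (Suc s)
  show ?case
  proof (cases "lo = Suc s")
    case False
    have "p ! s < a \<longleftrightarrow> p ! Suc s < a"
      using fan_side_preserved_along_edge[OF nc fan path_edges_nth] Suc.prems False avoid
        \<open>hi < length p\<close>
      by simp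
    with Suc False show ?thesis by simp
  qed simp
qed

lemma fan_neighbour_position:
  assumes "distinct p" "i < length p" "p ! i = 0" "{0, a} \<in> path_edges p"
    and "k < length p" "p ! k = a"
  shows "k + 1 = i \<or> k = i + 1"
proof -
  obtain j where j: "Suc j < length p" "{0, a} = {p ! j, p ! Suc j}"
    using assms(4) unfolding path_edges_def by blast
  have "p ! j \<noteq> p ! Suc j"
    using assms(1) j(1) by (simp add: nth_eq_iff_index_eq)
  then have "p ! j = 0 \<and> p ! Suc j = a \<or> p ! j = a \<and> p ! Suc j = 0"
    using j(2) by (auto simp: doubleton_eq_iff)
  then show ?thesis
    using assms j(1) by (metis Suc_eq_plus1 Suc_lessD nth_eq_iff_index_eq)
qed

lemma fan_side_constant:
  assumes sh: "simple_ham_path n p" and zero: "i < n" "p ! i = 0"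
    and fan: "{0, a} \<in> path_edges p"
    and "s < n" "t < n"
    and same_segment: "s + 1 < i \<and> t + 1 < i \<or> i + 1 < s \<and> i + 1 < t"
  shows "p ! s < a \<longleftrightarrow> p ! t < a"
proof -
  have len: "length p = n" and dist: "distinct p"
    and nc: "\<forall>e\<in>path_edges p. \<forall>f\<in>path_edges p. \<not> crosses e f"
    using sh simple_ham_path_length unfolding simple_ham_path_def by auto
  have avoid: "p ! k \<notin> {0, a}" if "k < n" "k + 1 \<noteq> i" "k \<noteq> i" "k \<noteq> i + 1" for k
  proof -
    have "p ! k \<noteq> 0"
      using that zero dist len by (metis nth_eq_iff_index_eq)
    moreover have "p ! k \<noteq> a"
      using that zero len fan_neighbour_position[OF dist _ zero(2) fan, of k] by auto
    ultimately show ?thesis by simp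
  qed
  consider "s + 1 < i" "t + 1 < i" | "i + 1 < s" "i + 1 < t"
    using same_segment by blast
  then show ?thesis
  proof cases
    case 1
    have side: "p ! k < a \<longleftrightarrow> p ! 0 < a" if "k \<le> i - 2" for k
    proof (rule fan_side_constant_on_segment[OF nc fan])
      show "p ! j \<notin> {0, a}" if "0 \<le> j" "j \<le> i - 2" for j
        by (rule avoid) (use that 1 zero in auto)
    qed (use that 1 zero len in auto)
    show ?thesis
      using side[of s] side[of t] 1 by linarith
  next
    case 2
    have side: "p ! k < a \<longleftrightarrow> p ! (i + 2) < a" if "i + 2 \<le> k" "k \<le> n - 1" for k
    proof (rule fan_side_constant_on_segment[OF nc fan])
      show "p ! j \<notin> {0, a}" if "i + 2 \<le> j" "j \<le> n - 1" for j
        by (rule avoid) (use that 2 \<open>s < n\<close> in auto)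
    qed (use that 2 \<open>s < n\<close> len in auto)
    show ?thesis
      using side[of s] side[of t] 2 \<open>s < n\<close> \<open>t < n\<close> by linarith
  qed
qed

lemma fan_non_neighbour_position:
  assumes sh: "simple_ham_path n p" and zero: "i < n" "p ! i = 0"
    and "s < n" "p ! s \<noteq> 0" "{0, p ! s} \<notin> path_edges p"
  shows "s + 1 < i \<or> i + 1 < s"
proof -
  have len: "length p = n" using simple_ham_path_length[OF sh] .
  have "s \<noteq> i" using assms by auto
  moreover have "s \<noteq> i + 1"
    using assms len path_edges_nth[of i p] by auto
  moreover have "s + 1 \<noteq> i"
    using assms len path_edges_nth[of s p] by (auto simp: insert_commute)
  ultimately show ?thesis by linarith
qed

lemma fan_edge_bounds:
  assumes "simple_ham_path n p" "{0, v} \<in> path_edges p"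
  shows "0 < v \<and> v < n"
proof -
  obtain j where j: "Suc j < length p" "{0, v} = {p ! j, p ! Suc j}"
    using assms(2) unfolding path_edges_def by blast
  have "p ! j \<noteq> p ! Suc j" "p ! j < n" "p ! Suc j < n"
    using assms(1) j(1) simple_ham_path_length[OF assms(1)] nth_mem[of j p] nth_mem[of "Suc j" p]
    unfolding simple_ham_path_def by (auto simp: nth_eq_iff_index_eq)
  then show ?thesis
    using j(2) by (auto simp: doubleton_eq_iff)
qed

lemma simple_ham_path_fan_at_zero:
  assumes sh: "simple_ham_path n p" and "2 \<le> n"
  shows "\<exists>v. {0, v} \<in> path_edges p \<and> (v = 1 \<or> v = n - 1 \<or> {0, Suc v} \<in> path_edges p)"
proof (rule ccontr)
  assume "\<not> ?thesis"
  then have far: "1 < v \<and> v < n - 1 \<and> {0, Suc v} \<notin> path_edges p"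
    if "{0, v} \<in> path_edges p" for v
    using that fan_edge_bounds[OF sh] by fastforce
  have len: "length p = n" and dist: "distinct p"
    using sh simple_ham_path_length unfolding simple_ham_path_def by auto
  obtain i where i: "i < n" "p ! i = 0"
    using simple_ham_path_obtain_position[OF sh, of 0] \<open>2 \<le> n\<close> by auto
  have away: "s + 1 < i \<or> i + 1 < s" if "s < n" "p ! s \<noteq> 0" "{0, p ! s} \<notin> path_edges p" for s
    using fan_non_neighbour_position[OF sh i that] .
  have left_edge: "{0, p ! (i - 1)} \<in> path_edges p" if "0 < i"
    using path_edges_nth[of "i - 1" p] that i len by (simp add: insert_commute)
  have right_edge: "{0, p ! Suc i} \<in> path_edges p" if "Suc i < n"
    using path_edges_nth[of i p] that i len by simp
  obtain a where a: "{0, a} \<in> path_edges p"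
    using left_edge right_edge i \<open>2 \<le> n\<close> by (cases "i = 0") auto
  obtain s where s: "s < n" "p ! s = 1"
    using simple_ham_path_obtain_position[OF sh, of 1] \<open>2 \<le> n\<close> by auto
  obtain t where t: "t < n" "p ! t = n - 1"
    using simple_ham_path_obtain_position[OF sh, of "n - 1"] \<open>2 \<le> n\<close> by auto
  have s_away: "s + 1 < i \<or> i + 1 < s" and t_away: "t + 1 < i \<or> i + 1 < t"
    using away[OF s(1)] away[OF t(1)] far s t \<open>2 \<le> n\<close> by auto
  have "\<not> (s + 1 < i \<and> t + 1 < i \<or> i + 1 < s \<and> i + 1 < t)"
    using fan_side_constant[OF sh i a s(1) t(1)] far[OF a] s t by auto
  then have opposite: "s + 1 < i \<and> i + 1 < t \<or> t + 1 < i \<and> i + 1 < s"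
    using s_away t_away by auto
  then have "0 < i" "Suc i < n"
    using s t by auto
  define lo where "lo = min (p ! (i - 1)) (p ! Suc i)"
  define hi where "hi = max (p ! (i - 1)) (p ! Suc i)"
  have lo: "{0, lo} \<in> path_edges p" and hi: "{0, hi} \<in> path_edges p"
    unfolding lo_def hi_def using left_edge right_edge \<open>0 < i\<close> \<open>Suc i < n\<close>
    by (simp_all add: min_def max_def)
  have "p ! (i - 1) \<noteq> p ! Suc i"
    using dist len \<open>0 < i\<close> \<open>Suc i < n\<close> by (simp add: nth_eq_iff_index_eq)
  then have "lo < hi"
    unfolding lo_def hi_def by linarith
  moreover have "Suc lo \<noteq> hi"
    using far[OF lo] hi by auto
  ultimately have between: "1 < lo" "Suc lo < hi" "hi < n - 1"
    using far[OF lo] far[OF hi] by auto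
  have "Suc lo < n"
    using between by linarith
  then obtain u where u: "u < n" "p ! u = Suc lo"
    by (rule simple_ham_path_obtain_position[OF sh])
  have "u + 1 < i \<or> i + 1 < u"
    using away[OF u(1)] far[OF lo] u(2) by auto
  \<comment> \<open>1, lo + 1 and n - 1 lie in three different arcs of the fan, but on only two stretches\<close>
  then have "s + 1 < i \<and> u + 1 < i \<or> i + 1 < s \<and> i + 1 < u
      \<or> t + 1 < i \<and> u + 1 < i \<or> i + 1 < t \<and> i + 1 < u"
    using opposite by auto
  then show False
    using fan_side_constant[OF sh i lo s(1) u(1)] fan_side_constant[OF sh i hi t(1) u(1)]
      s t u between by auto
qed

definition fan_blocker :: "nat \<Rightarrow> nat set set" where
  "fan_blocker m = (\<lambda>v. {0, v}) ` insert 1 ((\<lambda>j. 2 * j) ` {1..<m})"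

lemma card_fan_blocker:
  assumes "1 \<le> m"
  shows "card (fan_blocker m) = m"
proof -
  have "inj_on (\<lambda>v. {0, v}) (insert 1 ((\<lambda>j. 2 * j) ` {1..<m}))"
    by (rule inj_onI) (auto simp: doubleton_eq_iff)
  moreover have "1 \<notin> (\<lambda>j. 2 * j) ` {1..<m}"
    by auto
  moreover have "card ((\<lambda>j. 2 * j) ` {1..<m}) = m - 1"
    by (simp add: card_image inj_on_def)
  ultimately show ?thesis
    unfolding fan_blocker_def using assms by (simp add: card_image)
qed

lemma fan_blocker_subset_ck_edges:
  assumes "2 \<le> m"
  shows "fan_blocker m \<subseteq> ck_edges (2 * m - 1)"
  using assms unfolding fan_blocker_def ck_edges_def by force

lemma fan_blocker_memI:
  assumes "0 < v" "v < 2 * m - 1" "v = 1 \<or> even v"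
  shows "{0, v} \<in> fan_blocker m"
proof (cases "v = 1")
  case False
  then have "v = 2 * (v div 2)" "v div 2 \<in> {1..<m}"
    using assms by auto
  then show ?thesis
    unfolding fan_blocker_def by blast
qed (simp add: fan_blocker_def)

theorem proposition2:
  fixes m :: nat
  assumes "m \<ge> 2"
  shows "\<exists>B. B \<subseteq> ck_edges (2 * m - 1) \<and> card B = m \<and>
           (\<forall>p. simple_ham_path (2 * m - 1) p \<longrightarrow> B \<inter> path_edges p \<noteq> {})"
proof -
  have "fan_blocker m \<inter> path_edges p \<noteq> {}" if sh: "simple_ham_path (2 * m - 1) p" for p
  proof -
    have "2 \<le> 2 * m - 1"
      using assms by simp
    then obtain v where v: "{0, v} \<in> path_edges p"
      and short: "v = 1 \<or> v = 2 * m - 1 - 1 \<or> {0, Suc v} \<in> path_edges p"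
      using simple_ham_path_fan_at_zero[OF sh] by blast
    obtain w where w: "{0, w} \<in> path_edges p" "0 < w" "w < 2 * m - 1" "w = 1 \<or> even w"
    proof (cases "v = 1 \<or> even v")
      case True
      then show ?thesis
        using v fan_edge_bounds[OF sh v] by (intro that[of v]) auto
    next
      case False
      then have "{0, Suc v} \<in> path_edges p" "even (Suc v)"
        using short assms by auto
      then show ?thesis
        using fan_edge_bounds[OF sh] by (intro that[of "Suc v"]) auto
    qed
    show ?thesis
      using fan_blocker_memI[OF w(2-4)] w(1) by blast
  qed
  then show ?thesis
    using fan_blocker_subset_ck_edges[OF assms] card_fan_blocker[of m] assms
    by (intro exI[of _ "fan_blocker m"]) simp
qed

end
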